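(* Let $(Z_k)_{k\ge1}$ be independent symmetrical real-valued random variables with unit variance, let $(a_{n,k})_{1\le k\le n<\infty}$ be real numbers, set $X_n=\sum_{k=1}^n a_{n,k}Z_k$, and let $(u_n)$ be vectors in a Hilbert space $\mathbb{H}$. Suppose there exist constants $C>0$ and $\alpha\le 1$ such that $|a_{n,k}|\le C(n-k+1)^{-\alpha}$ for all $1\le k\le n$, and that $\|u_n\|^2\le C' n^{-(1+2\beta)}$ for all $n\ge1$, for some constants $C'>0$ and $\beta>1-\alpha$. Then $\sum_{n=1}^\infty X_nu_n$ converges almost surely in $\mathbb{H}$, and so does $\sum_{n=1}^\infty \epsilon_nX_nu_n$ for every non-random choice of signs $(\epsilon_n)\in\{-1,1\}^{\mathbb{N}}$.
   Context: A real random variable $Z$ is symmetrical if $Z$ and $-Z$ have the same distribution; unit variance means $\mathbb{E}(Z^2)=1$. *)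

theory Defs
  imports "HOL-Probability.Probability"
begin

end

theory Submission
  imports Defs "HOL-Library.Discrete_Functions"
begin

text \<open>
  Expanding \<open>X n\<close>, a block \<open>\<Sum>n\<in>{m<..N}. X n *\<^sub>R u n\<close> of the series equals
  \<open>\<Sum>k. Z k *\<^sub>R v k\<close> with deterministic vectors \<open>v k\<close>. Symmetry and independence make the
  \<open>Z k\<close> orthonormal in \<open>L\<^sup>2\<close>, so the second moment of the block is \<open>\<Sum>k. \<parallel>v k\<parallel>\<^sup>2\<close>, which is
  dominated by a superadditive function \<open>F m N\<close> of the block. The Menshov--Rademacher--Moricz
  dyadic maximal inequality bounds the second moment of the largest partial block sum inside
  \<open>(2^i, 2^(i+1)]\<close> by \<open>(i+1)\<^sup>2 F (2^i) (2^(i+1))\<close>, and the decay hypotheses make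
  \<open>F (2^i) (2^(i+1))\<close> geometrically small. Hence the square roots of these maxima are almost surely
  summable, which makes the partial sums Cauchy. Multiplying \<open>X n\<close> by a sign only changes the
  signs of the \<open>a n k\<close>, so the second claim is an instance of the first.
\<close>

lemma power2_norm_sum_scaleR:
  fixes v :: "'i \<Rightarrow> 'h::real_inner"
  shows "(norm (\<Sum>k\<in>K. c k *\<^sub>R v k))\<^sup>2 = (\<Sum>j\<in>K. \<Sum>k\<in>K. c j * c k * inner (v j) (v k))"
  by (simp add: power2_norm_eq_inner inner_sum_left inner_sum_right sum_distrib_left mult.assoc inner_commute)
    (subst sum.swap, simp add: inner_commute)

context prob_space
begin

definition L2_orthonormal :: "(nat \<Rightarrow> 'a \<Rightarrow> real) \<Rightarrow> nat set \<Rightarrow> bool" where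
  "L2_orthonormal Z K \<longleftrightarrow> (\<forall>j\<in>K. \<forall>k\<in>K. integrable M (\<lambda>x. Z j x * Z k x) \<and>
     expectation (\<lambda>x. Z j x * Z k x) = (if j = k then 1 else 0))"

lemma expectation_eq_0_if_symmetric:
  fixes Z :: "'a \<Rightarrow> real"
  assumes [measurable]: "Z \<in> borel_measurable M"
    and symm: "distr M borel Z = distr M borel (\<lambda>x. - Z x)"
  shows "expectation Z = 0"
proof -
  have "expectation Z = integral\<^sup>L (distr M borel Z) (\<lambda>x. x)"
    by (simp add: integral_distr)
  also have "\<dots> = integral\<^sup>L (distr M borel (\<lambda>x. - Z x)) (\<lambda>x. x)"
    using symm by simp
  also have "\<dots> = - expectation Z"
    by (simp add: integral_distr)
  finally show ?thesis by simp
qed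

lemma L2_orthonormal_if_indep_symmetric:
  fixes Z :: "nat \<Rightarrow> 'a \<Rightarrow> real"
  assumes meas: "\<And>k. k \<in> K \<Longrightarrow> Z k \<in> borel_measurable M"
    and indep: "indep_vars (\<lambda>_. borel) Z K"
    and symm: "\<And>k. k \<in> K \<Longrightarrow> distr M borel (Z k) = distr M borel (\<lambda>x. - Z k x)"
    and sq_int: "\<And>k. k \<in> K \<Longrightarrow> integrable M (\<lambda>x. (Z k x)\<^sup>2)"
    and var: "\<And>k. k \<in> K \<Longrightarrow> expectation (\<lambda>x. (Z k x)\<^sup>2) = 1"
  shows "L2_orthonormal Z K"
  unfolding L2_orthonormal_def
proof (intro ballI)
  fix j k assume jk: "j \<in> K" "k \<in> K"
  have int: "integrable M (Z i)" if "i \<in> K" for i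
    by (rule square_integrable_imp_integrable) (use that meas sq_int in auto)
  show "integrable M (\<lambda>x. Z j x * Z k x) \<and>
      expectation (\<lambda>x. Z j x * Z k x) = (if j = k then 1 else 0)"
  proof (cases "j = k")
    case True
    then show ?thesis using sq_int[OF jk(1)] var[OF jk(1)] by (simp add: power2_eq_square)
  next
    case False
    have ind: "indep_vars (\<lambda>_. borel) Z {j, k}"
      by (rule indep_vars_subset[OF indep]) (use jk in auto)
    have "integrable M (\<lambda>x. \<Prod>i\<in>{j, k}. Z i x)"
      by (rule indep_vars_integrable[OF _ ind]) (use jk int in auto)
    moreover have "expectation (\<lambda>x. \<Prod>i\<in>{j, k}. Z i x) = (\<Prod>i\<in>{j, k}. expectation (Z i))"
      by (rule indep_vars_lebesgue_integral[OF _ ind]) (use jk int in auto)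
    moreover have "expectation (Z k) = 0"
      using jk by (intro expectation_eq_0_if_symmetric meas symm)
    ultimately show ?thesis using False by simp
  qed
qed

lemma
  fixes v :: "nat \<Rightarrow> 'h::real_inner"
  assumes orth: "L2_orthonormal Z K" and K: "finite K"
  shows integrable_norm_sum_orthonormal_sq: "integrable M (\<lambda>x. (norm (\<Sum>k\<in>K. Z k x *\<^sub>R v k))\<^sup>2)"
    and expectation_norm_sum_orthonormal_sq:
      "expectation (\<lambda>x. (norm (\<Sum>k\<in>K. Z k x *\<^sub>R v k))\<^sup>2) = (\<Sum>k\<in>K. (norm (v k))\<^sup>2)"
proof -
  have expand: "(\<lambda>x. (norm (\<Sum>k\<in>K. Z k x *\<^sub>R v k))\<^sup>2) =
      (\<lambda>x. \<Sum>j\<in>K. \<Sum>k\<in>K. Z j x * Z k x * inner (v j) (v k))"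
    by (simp add: power2_norm_sum_scaleR)
  have int: "integrable M (\<lambda>x. Z j x * Z k x * inner (v j) (v k))" if "j \<in> K" "k \<in> K" for j k
    using orth that unfolding L2_orthonormal_def by simp
  show "integrable M (\<lambda>x. (norm (\<Sum>k\<in>K. Z k x *\<^sub>R v k))\<^sup>2)"
    unfolding expand using int by (intro Bochner_Integration.integrable_sum) auto
  have "expectation (\<lambda>x. \<Sum>j\<in>K. \<Sum>k\<in>K. Z j x * Z k x * inner (v j) (v k))
      = (\<Sum>j\<in>K. \<Sum>k\<in>K. expectation (\<lambda>x. Z j x * Z k x) * inner (v j) (v k))"
    using int by (simp add: integral_sum integrable_sum)
  also have "\<dots> = (\<Sum>j\<in>K. \<Sum>k\<in>K. if j = k then inner (v j) (v k) else 0)"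
    using orth unfolding L2_orthonormal_def by (intro sum.cong refl) auto
  also have "\<dots> = (\<Sum>k\<in>K. (norm (v k))\<^sup>2)"
    using K by (simp add: power2_norm_eq_inner)
  finally show "expectation (\<lambda>x. (norm (\<Sum>k\<in>K. Z k x *\<^sub>R v k))\<^sup>2) = (\<Sum>k\<in>K. (norm (v k))\<^sup>2)"
    unfolding expand .
qed

end

lemma power2_add_le_weighted:
  fixes a b t :: real
  assumes "t > 0"
  shows "(a + b)\<^sup>2 \<le> (1 + t) * a\<^sup>2 + (1 + 1 / t) * b\<^sup>2"
proof -
  have "0 \<le> (t * a - b)\<^sup>2 / t" using assms by simp
  also have "(t * a - b)\<^sup>2 / t = t * a\<^sup>2 - 2 * a * b + b\<^sup>2 / t"
    using assms by (simp add: field_simps power2_eq_square)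
  finally show ?thesis by (simp add: power2_sum algebra_simps)
qed

lemma integrable_Max_image:
  fixes f :: "'i \<Rightarrow> 'a \<Rightarrow> real"
  assumes "finite I" "I \<noteq> {}" "\<And>i. i \<in> I \<Longrightarrow> integrable M (f i)"
  shows "integrable M (\<lambda>x. Max ((\<lambda>i. f i x) ` I))"
  using assms by (induction I rule: finite_ne_induct) auto

definition dyadic_max_sq :: "(nat \<Rightarrow> nat \<Rightarrow> 'a \<Rightarrow> 'b::real_normed_vector) \<Rightarrow> nat \<Rightarrow> nat \<Rightarrow> 'a \<Rightarrow> real"
  where "dyadic_max_sq S m r x = Max ((\<lambda>j. (norm (S m (m + j) x))\<^sup>2) ` {..2^r})"

lemma le_dyadic_max_sq: "j \<le> 2^r \<Longrightarrow> (norm (S m (m + j) x))\<^sup>2 \<le> dyadic_max_sq S m r x"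
  unfolding dyadic_max_sq_def by (intro Max_ge) auto

lemma dyadic_max_sq_nonneg: "0 \<le> dyadic_max_sq S m r x"
  using le_dyadic_max_sq[of 0 r S m x] by (meson order_trans zero_le_power2 zero_le_numeral zero_le_power)

lemma integrable_dyadic_max_sq:
  assumes "\<And>n. m \<le> n \<Longrightarrow> integrable M (\<lambda>x. (norm (S m n x))\<^sup>2)"
  shows "integrable M (dyadic_max_sq S m r)"
  unfolding dyadic_max_sq_def[abs_def] using assms by (intro integrable_Max_image) auto

lemma dyadic_max_sq_Suc_le:
  assumes add: "\<And>m l n. m \<le> l \<Longrightarrow> l \<le> n \<Longrightarrow> S m l x + S l n x = S m n x"
    and t: "t > 0"
  shows "dyadic_max_sq S m (Suc r) x \<le> (1 + t) * (norm (S m (m + 2^r) x))\<^sup>2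
    + (1 + 1 / t) * (dyadic_max_sq S m r x + dyadic_max_sq S (m + 2^r) r x)"
    (is "_ \<le> ?rhs")
proof -
  define mid where "mid = m + 2^r"
  have first_half: "dyadic_max_sq S m r x \<le> ?rhs"
    using dyadic_max_sq_nonneg[of S m r x] dyadic_max_sq_nonneg[of S mid r x] t
    unfolding mid_def[symmetric] by (simp add: algebra_simps add_increasing)
  have "(norm (S m (m + j) x))\<^sup>2 \<le> ?rhs" if j: "j \<le> 2^Suc r" for j
  proof (cases "j \<le> 2^r")
    case True
    then show ?thesis by (rule order_trans[OF le_dyadic_max_sq first_half])
  next
    case False
    define i where "i = j - 2^r"
    have i: "m + j = mid + i" "i \<le> 2^r" using False j unfolding i_def mid_def by auto
    have "S m (m + j) x = S m mid x + S mid (mid + i) x"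
      using add[of m mid "mid + i"] unfolding i(1) mid_def by simp
    then have "norm (S m (m + j) x) \<le> norm (S m mid x) + norm (S mid (mid + i) x)"
      by (metis norm_triangle_ineq)
    then have "(norm (S m (m + j) x))\<^sup>2 \<le> (norm (S m mid x) + norm (S mid (mid + i) x))\<^sup>2"
      by (simp add: power_mono)
    also have "\<dots> \<le> (1 + t) * (norm (S m mid x))\<^sup>2 + (1 + 1 / t) * (norm (S mid (mid + i) x))\<^sup>2"
      using t by (rule power2_add_le_weighted)
    also have "\<dots> \<le> ?rhs"
      using le_dyadic_max_sq[OF i(2), of S mid x] dyadic_max_sq_nonneg[of S m r x] t
      unfolding mid_def[symmetric] by (intro add_left_mono mult_left_mono) auto
    finally show ?thesis .
  qed
  then show ?thesis unfolding dyadic_max_sq_def[of _ _ "Suc r"] by (subst Max_le_iff) auto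
qed

lemma integral_dyadic_max_sq_le:
  fixes S :: "nat \<Rightarrow> nat \<Rightarrow> 'a \<Rightarrow> 'b::real_normed_vector" and F :: "nat \<Rightarrow> nat \<Rightarrow> real"
  assumes add: "\<And>m l n x. m \<le> l \<Longrightarrow> l \<le> n \<Longrightarrow> S m l x + S l n x = S m n x"
    and int: "\<And>m n. m \<le> n \<Longrightarrow> integrable M (\<lambda>x. (norm (S m n x))\<^sup>2)"
    and bound: "\<And>m n. m \<le> n \<Longrightarrow> (\<integral>x. (norm (S m n x))\<^sup>2 \<partial>M) \<le> F m n"
    and superadd: "\<And>m l n. m \<le> l \<Longrightarrow> l \<le> n \<Longrightarrow> F m l + F l n \<le> F m n"
    and nonneg: "\<And>m n. m \<le> n \<Longrightarrow> 0 \<le> F m n"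
  shows "(\<integral>x. dyadic_max_sq S m r x \<partial>M) \<le> (real r + 1)\<^sup>2 * F m (m + 2^r)"
proof (induction r arbitrary: m)
  case 0
  have "S m m x = 0" for x using add[of m m m x] by simp
  then have "dyadic_max_sq S m 0 x = (norm (S m (m + 1) x))\<^sup>2" for x
    unfolding dyadic_max_sq_def by (simp add: atMost_Suc)
  then show ?case using bound[of m "m + 1"] by simp
next
  case (Suc r)
  define mid where "mid = m + 2^r"
  define t where "t = real r + 1"
  have t: "t > 0" unfolding t_def by simp
  have int_max: "integrable M (dyadic_max_sq S n r)" for n
    using int by (rule integrable_dyadic_max_sq)
  have F_split: "F m mid + F mid (mid + 2^r) \<le> F m (m + 2^Suc r)"
    using superadd[of m mid "mid + 2^r"] unfolding mid_def by (simp add: algebra_simps mult_2)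
  then have F_le: "F m mid \<le> F m (m + 2^Suc r)"
    using nonneg[of mid "mid + 2^r"] by simp
  have pointwise: "dyadic_max_sq S m (Suc r) x \<le> (1 + t) * (norm (S m mid x))\<^sup>2
      + (1 + 1 / t) * (dyadic_max_sq S m r x + dyadic_max_sq S mid r x)" for x
    unfolding mid_def by (rule dyadic_max_sq_Suc_le) (use add t in auto)
  have "(\<integral>x. dyadic_max_sq S m (Suc r) x \<partial>M) \<le> (\<integral>x. (1 + t) * (norm (S m mid x))\<^sup>2
      + (1 + 1 / t) * (dyadic_max_sq S m r x + dyadic_max_sq S mid r x) \<partial>M)"
    using int_max int[of m mid] pointwise unfolding mid_def
    by (intro integral_mono integrable_dyadic_max_sq int) auto
  also have "\<dots> = (1 + t) * (\<integral>x. (norm (S m mid x))\<^sup>2 \<partial>M)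
      + (1 + 1 / t) * ((\<integral>x. dyadic_max_sq S m r x \<partial>M) + (\<integral>x. dyadic_max_sq S mid r x \<partial>M))"
    using int_max int[of m mid] unfolding mid_def by simp
  also have "\<dots> \<le> (1 + t) * F m mid + (1 + 1 / t) * (t\<^sup>2 * F m mid + t\<^sup>2 * F mid (mid + 2^r))"
    using bound[of m mid] Suc.IH[of m] Suc.IH[of mid] t
    unfolding mid_def t_def by (intro add_mono mult_left_mono) auto
  also have "\<dots> = (1 + t) * F m mid + (1 + t) * t * (F m mid + F mid (mid + 2^r))"
    using t by (simp add: field_simps power2_eq_square)
  also have "\<dots> \<le> (1 + t) * F m (m + 2^Suc r) + (1 + t) * t * F m (m + 2^Suc r)"
    using F_split F_le t by (intro add_mono mult_left_mono) auto
  also have "\<dots> = (real (Suc r) + 1)\<^sup>2 * F m (m + 2^Suc r)"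
    unfolding t_def by (simp add: power2_eq_square algebra_simps)
  finally show ?case .
qed

lemma powr_Suc_diff_ge:
  fixes p :: real
  assumes p: "0 < p" "p < 1" and N: "N \<ge> 1"
  shows "p * real (N + 1) powr (p - 1) \<le> real (N + 1) powr p - real N powr p"
proof -
  have "\<exists>z. real N < z \<and> z < real (N + 1) \<and>
      real (N + 1) powr p - real N powr p = (real (N + 1) - real N) * (p * z powr (p - 1))"
    by (rule MVT2) (use N in \<open>auto intro!: has_real_derivative_powr\<close>)
  then obtain z where z: "real N < z" "z < real (N + 1)"
    "real (N + 1) powr p - real N powr p = p * z powr (p - 1)" by auto
  have "real (N + 1) powr (p - 1) \<le> z powr (p - 1)"
    by (rule powr_mono2') (use z p N in auto)
  then show ?thesis using z p by simp
qed

lemma sum_powr_neg_le: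
  fixes g :: real
  assumes g: "g < 1"
  shows "(\<Sum>j\<in>{1..N}. real j powr (-g)) \<le> (1 / (1 - g) + 1) * real N powr (1 - g)"
proof (cases "g > 0")
  case True
  have "(\<Sum>j\<in>{1..N}. real j powr (-g)) \<le> real N powr (1 - g) / (1 - g)"
  proof (induction N)
    case (Suc N)
    have step: "real N powr (1 - g) + (1 - g) * real (N + 1) powr (-g) \<le> real (N + 1) powr (1 - g)"
    proof (cases "N = 0")
      case False
      then show ?thesis using powr_Suc_diff_ge[of "1 - g" N] True g by simp
    qed (use g True in simp)
    have "real N powr (1 - g) / (1 - g) + real (N + 1) powr (-g)
        = (real N powr (1 - g) + (1 - g) * real (N + 1) powr (-g)) / (1 - g)"
      using g by (simp add: field_simps)
    also have "\<dots> \<le> real (N + 1) powr (1 - g) / (1 - g)"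
      using step g by (intro divide_right_mono) auto
    finally show ?case using Suc by simp
  qed simp
  also have "\<dots> \<le> (1 / (1 - g) + 1) * real N powr (1 - g)"
    by (simp add: distrib_right)
  finally show ?thesis .
next
  case False
  have "(\<Sum>j\<in>{1..N}. real j powr (-g)) \<le> (\<Sum>j\<in>{1..N}. real N powr (-g))"
    by (rule sum_mono) (use False in \<open>auto intro!: powr_mono2\<close>)
  also have "\<dots> = real N powr (1 - g)"
    by (cases "N = 0") (auto simp: powr_diff powr_minus field_simps)
  also have "\<dots> \<le> (1 / (1 - g) + 1) * real N powr (1 - g)"
    using g by (simp add: field_simps)
  finally show ?thesis .
qed

definition block_sum :: "(nat \<Rightarrow> 'w \<Rightarrow> real) \<Rightarrow> (nat \<Rightarrow> 'h::real_vector) \<Rightarrow> nat \<Rightarrow> nat \<Rightarrow> 'w \<Rightarrow> 'h"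
  where "block_sum X u m N x = (\<Sum>n\<in>{m<..N}. X n x *\<^sub>R u n)"

definition block_coeff :: "(nat \<Rightarrow> nat \<Rightarrow> real) \<Rightarrow> (nat \<Rightarrow> 'h::real_vector) \<Rightarrow> nat \<Rightarrow> nat \<Rightarrow> nat \<Rightarrow> 'h"
  where "block_coeff a u m N k = (\<Sum>n\<in>{m<..N}. if k \<le> n then a n k *\<^sub>R u n else 0)"

definition block_weight :: "(nat \<Rightarrow> nat \<Rightarrow> real) \<Rightarrow> (nat \<Rightarrow> 'h::real_normed_vector) \<Rightarrow> nat \<Rightarrow> nat \<Rightarrow> nat \<Rightarrow> real"
  where "block_weight a u m N k = (\<Sum>n\<in>{m<..N}. if k \<le> n then \<bar>a n k\<bar> * norm (u n) else 0)"

definition block_bound :: "(nat \<Rightarrow> nat \<Rightarrow> real) \<Rightarrow> (nat \<Rightarrow> 'h::real_normed_vector) \<Rightarrow> nat \<Rightarrow> nat \<Rightarrow> real"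
  where "block_bound a u m N = (\<Sum>k\<in>{1..N}. (block_weight a u m N k)\<^sup>2)"

lemma sum_greaterThanAtMost_split:
  fixes m l N :: nat
  assumes "m \<le> l" "l \<le> N"
  shows "(\<Sum>n\<in>{m<..N}. f n) = (\<Sum>n\<in>{m<..l}. f n) + (\<Sum>n\<in>{l<..N}. f n)"
proof -
  have "{m<..N} = {m<..l} \<union> {l<..N}" using assms by auto
  then show ?thesis by (simp add: sum.union_disjoint)
qed

lemma block_sum_add:
  assumes "m \<le> l" "l \<le> N"
  shows "block_sum X u m l x + block_sum X u l N x = block_sum X u m N x"
  unfolding block_sum_def using assms by (rule sum_greaterThanAtMost_split[symmetric])

lemma block_sum_eq_sum_coeff:
  assumes X: "\<And>n x. X n x = (\<Sum>k = 1..n. a n k * Z k x)"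
  shows "block_sum X u m N x = (\<Sum>k\<in>{1..N}. Z k x *\<^sub>R block_coeff a u m N k)"
proof -
  have "X n x *\<^sub>R u n = (\<Sum>k\<in>{1..N}. if k \<le> n then Z k x *\<^sub>R a n k *\<^sub>R u n else 0)"
    if "n \<le> N" for n
  proof -
    have "{k \<in> {1..N}. k \<le> n} = {1..n}" using that by auto
    then have "(\<Sum>k\<in>{1..N}. if k \<le> n then Z k x *\<^sub>R a n k *\<^sub>R u n else 0)
        = (\<Sum>k\<in>{1..n}. Z k x *\<^sub>R a n k *\<^sub>R u n)"
      by (simp add: sum.inter_filter[symmetric])
    also have "\<dots> = X n x *\<^sub>R u n"
      by (simp add: X scaleR_sum_left mult.commute)
    finally show ?thesis ..
  qed
  then have "block_sum X u m N x
      = (\<Sum>n\<in>{m<..N}. \<Sum>k\<in>{1..N}. if k \<le> n then Z k x *\<^sub>R a n k *\<^sub>R u n else 0)"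
    unfolding block_sum_def by (intro sum.cong refl) simp
  also have "\<dots> = (\<Sum>k\<in>{1..N}. \<Sum>n\<in>{m<..N}. if k \<le> n then Z k x *\<^sub>R a n k *\<^sub>R u n else 0)"
    by (rule sum.swap)
  also have "\<dots> = (\<Sum>k\<in>{1..N}. Z k x *\<^sub>R block_coeff a u m N k)"
    unfolding block_coeff_def scaleR_sum_right by (intro sum.cong refl) simp
  finally show ?thesis .
qed

lemma norm_block_coeff_le: "norm (block_coeff a u m N k) \<le> block_weight a u m N k"
  unfolding block_coeff_def block_weight_def
  by (rule order_trans[OF norm_sum]) (auto intro!: sum_mono)

lemma block_weight_nonneg: "0 \<le> block_weight a u m N k"
  unfolding block_weight_def by (auto intro!: sum_nonneg)

lemma block_bound_nonneg: "0 \<le> block_bound a u m N"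
  unfolding block_bound_def by (auto intro!: sum_nonneg)

lemma block_bound_superadd:
  assumes "m \<le> l" "l \<le> N"
  shows "block_bound a u m l + block_bound a u l N \<le> block_bound a u m N"
proof -
  have "block_bound a u m l \<le> (\<Sum>k\<in>{1..N}. (block_weight a u m l k)\<^sup>2)"
    unfolding block_bound_def using assms by (intro sum_mono2) auto
  moreover have "(block_weight a u m l k)\<^sup>2 + (block_weight a u l N k)\<^sup>2 \<le> (block_weight a u m N k)\<^sup>2" for k
  proof -
    have "block_weight a u m N k = block_weight a u m l k + block_weight a u l N k"
      unfolding block_weight_def using assms by (rule sum_greaterThanAtMost_split)
    then show ?thesis
      using block_weight_nonneg[of a u m l k] block_weight_nonneg[of a u l N k]
      by (simp add: power2_sum)
  qed
  then have "(\<Sum>k\<in>{1..N}. (block_weight a u m l k)\<^sup>2) + block_bound a u l N \<le> block_bound a u m N"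
    unfolding block_bound_def sum.distrib[symmetric] by (intro sum_mono)
  ultimately show ?thesis by simp
qed

lemma (in prob_space)
  fixes u :: "nat \<Rightarrow> 'h::real_inner"
  assumes orth: "L2_orthonormal Z {1..}" and X: "\<And>n x. X n x = (\<Sum>k = 1..n. a n k * Z k x)"
  shows integrable_block_sum_sq: "integrable M (\<lambda>x. (norm (block_sum X u m N x))\<^sup>2)"
    and expectation_block_sum_sq_le: "expectation (\<lambda>x. (norm (block_sum X u m N x))\<^sup>2) \<le> block_bound a u m N"
proof -
  have orth_N: "L2_orthonormal Z {1..N}"
    using orth unfolding L2_orthonormal_def by auto
  show "integrable M (\<lambda>x. (norm (block_sum X u m N x))\<^sup>2)"
    unfolding block_sum_eq_sum_coeff[OF X] by (rule integrable_norm_sum_orthonormal_sq[OF orth_N]) simp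
  have "expectation (\<lambda>x. (norm (block_sum X u m N x))\<^sup>2) = (\<Sum>k\<in>{1..N}. (norm (block_coeff a u m N k))\<^sup>2)"
    unfolding block_sum_eq_sum_coeff[OF X] by (rule expectation_norm_sum_orthonormal_sq[OF orth_N]) simp
  also have "\<dots> \<le> block_bound a u m N"
    unfolding block_bound_def by (intro sum_mono power_mono norm_block_coeff_le) auto
  finally show "expectation (\<lambda>x. (norm (block_sum X u m N x))\<^sup>2) \<le> block_bound a u m N" .
qed

lemma sum_powr_shift_le:
  fixes k P :: nat
  assumes "1 \<le> k"
  shows "(\<Sum>n\<in>{P<..2 * P}. if k \<le> n then real (n - k + 1) powr (-g) else 0)
    \<le> (\<Sum>j\<in>{1..2 * P}. real j powr (-g))"
proof -
  have "(\<Sum>n\<in>{P<..2 * P}. if k \<le> n then real (n - k + 1) powr (-g) else 0)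
      = (\<Sum>n\<in>{P<..2 * P} \<inter> {n. k \<le> n}. real (n - k + 1) powr (-g))"
    by (subst sum.inter_restrict) (auto intro!: sum.cong)
  also have "\<dots> = (\<Sum>j\<in>(\<lambda>n. n - k + 1) ` ({P<..2 * P} \<inter> {n. k \<le> n}). real j powr (-g))"
    by (subst sum.reindex) (auto simp: inj_on_def)
  also have "\<dots> \<le> (\<Sum>j\<in>{1..2 * P}. real j powr (-g))"
    using assms by (intro sum_mono2) auto
  finally show ?thesis .
qed

lemma block_weight_dyadic_le:
  fixes a :: "nat \<Rightarrow> nat \<Rightarrow> real" and u :: "nat \<Rightarrow> 'h::real_normed_vector"
  assumes C: "C \<ge> 0" and g: "g < 1" and D: "D \<ge> 0" and q: "q \<ge> 0"
    and a_bound: "\<And>n k. 1 \<le> k \<Longrightarrow> k \<le> n \<Longrightarrow> \<bar>a n k\<bar> \<le> C * real (n - k + 1) powr (-g)"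
    and u_bound: "\<And>n. n \<ge> 1 \<Longrightarrow> norm (u n) \<le> D * real n powr (-q)"
    and P: "P \<ge> 1" and k: "k \<ge> 1"
  shows "block_weight a u P (2 * P) k
    \<le> C * D * (1 / (1 - g) + 1) * 2 powr (1 - g) * real P powr (1 - g - q)"
proof -
  let ?shift = "\<lambda>n. if k \<le> n then real (n - k + 1) powr (-g) else 0"
  have "block_weight a u P (2 * P) k \<le> (\<Sum>n\<in>{P<..2 * P}. C * D * real P powr (-q) * ?shift n)"
    unfolding block_weight_def
  proof (intro sum_mono)
    fix n assume n: "n \<in> {P<..2 * P}"
    have "norm (u n) \<le> D * real n powr (-q)" using u_bound[of n] n P by auto
    also have "\<dots> \<le> D * real P powr (-q)"
      using n P D q by (intro mult_left_mono powr_mono2') auto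
    finally have u_n: "norm (u n) \<le> D * real P powr (-q)" .
    show "(if k \<le> n then \<bar>a n k\<bar> * norm (u n) else 0) \<le> C * D * real P powr (-q) * ?shift n"
    proof (cases "k \<le> n")
      case True
      have "\<bar>a n k\<bar> * norm (u n) \<le> (C * real (n - k + 1) powr (-g)) * (D * real P powr (-q))"
        using a_bound[of k n] k True u_n C by (intro mult_mono) auto
      then show ?thesis using True by (simp add: mult_ac)
    qed simp
  qed
  also have "\<dots> = C * D * real P powr (-q) * (\<Sum>n\<in>{P<..2 * P}. ?shift n)"
    by (simp add: sum_distrib_left)
  also have "\<dots> \<le> C * D * real P powr (-q) * ((1 / (1 - g) + 1) * real (2 * P) powr (1 - g))"
    using order_trans[OF sum_powr_shift_le[OF k] sum_powr_neg_le[OF g]] C D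
    by (intro mult_left_mono) auto
  also have "\<dots> = C * D * (1 / (1 - g) + 1) * 2 powr (1 - g) * real P powr (1 - g - q)"
  proof -
    have "real (2 * P) powr (1 - g) = 2 powr (1 - g) * real P powr (1 - g)"
      by (simp add: powr_mult)
    moreover have "real P powr (1 - g - q) = real P powr (1 - g) * real P powr (-q)"
      by (simp add: powr_add[symmetric])
    ultimately show ?thesis by (simp add: mult_ac)
  qed
  finally show ?thesis .
qed

lemma block_bound_dyadic_le:
  fixes a :: "nat \<Rightarrow> nat \<Rightarrow> real" and u :: "nat \<Rightarrow> 'h::real_normed_vector"
  assumes C: "C \<ge> 0" and g: "g < 1" and D: "D \<ge> 0" and q: "q \<ge> 0"
    and a_bound: "\<And>n k. 1 \<le> k \<Longrightarrow> k \<le> n \<Longrightarrow> \<bar>a n k\<bar> \<le> C * real (n - k + 1) powr (-g)"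
    and u_bound: "\<And>n. n \<ge> 1 \<Longrightarrow> norm (u n) \<le> D * real n powr (-q)"
  obtains K where "\<And>P. P \<ge> 1 \<Longrightarrow> block_bound a u P (2 * P) \<le> K * real P powr (3 - 2 * q - 2 * g)"
proof
  define K' where "K' = C * D * (1 / (1 - g) + 1) * 2 powr (1 - g)"
  fix P :: nat assume P: "P \<ge> 1"
  have "block_bound a u P (2 * P) \<le> (\<Sum>k\<in>{1..2 * P}. (K' * real P powr (1 - g - q))\<^sup>2)"
    unfolding block_bound_def K'_def
    using block_weight_dyadic_le[OF C g D q a_bound u_bound P]
    by (intro sum_mono power_mono) (auto intro: block_weight_nonneg)
  also have "\<dots> = 2 * K'\<^sup>2 * (real P * (real P powr (1 - g - q))\<^sup>2)"
    by (simp add: power_mult_distrib)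
  also have "\<dots> = 2 * K'\<^sup>2 * real P powr (3 - 2 * q - 2 * g)"
    using P by (simp add: power2_eq_square powr_mult_base powr_add[symmetric] algebra_simps)
  finally show "block_bound a u P (2 * P) \<le> 2 * K'\<^sup>2 * real P powr (3 - 2 * q - 2 * g)" .
qed

lemma AE_summable_if_summable_integral:
  fixes f :: "nat \<Rightarrow> 'a \<Rightarrow> real"
  assumes nonneg: "\<And>i x. 0 \<le> f i x" and int: "\<And>i. integrable M (f i)"
    and summable: "summable (\<lambda>i. \<integral>x. f i x \<partial>M)"
  shows "AE x in M. summable (\<lambda>i. f i x)"
proof -
  have meas: "\<And>i. (\<lambda>x. ennreal (f i x)) \<in> borel_measurable M"
    using int by (auto intro: borel_measurable_integrable)
  have "(\<integral>\<^sup>+ x. (\<Sum>i. ennreal (f i x)) \<partial>M) = (\<Sum>i. \<integral>\<^sup>+ x. ennreal (f i x) \<partial>M)"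
    by (rule nn_integral_suminf[OF meas])
  also have "\<dots> = (\<Sum>i. ennreal (\<integral>x. f i x \<partial>M))"
    using int nonneg by (subst nn_integral_eq_integral) auto
  also have "\<dots> = ennreal (\<Sum>i. \<integral>x. f i x \<partial>M)"
    using summable nonneg by (intro suminf_ennreal2) (auto intro!: integral_nonneg_AE)
  finally have "(\<integral>\<^sup>+ x. (\<Sum>i. ennreal (f i x)) \<partial>M) \<noteq> \<infinity>" by simp
  then have "AE x in M. (\<Sum>i. ennreal (f i x)) \<noteq> \<infinity>"
    using meas by (intro nn_integral_noteq_infinite) auto
  then show ?thesis
    by eventually_elim (auto intro!: summable_suminf_not_top nonneg)
qed

lemma summable_power2_mult_geometric:
  fixes s :: real
  assumes s: "0 \<le> s" "s < 1"
  shows "summable (\<lambda>n. (real n + 1)\<^sup>2 * s^n)"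
proof -
  define t where "t = sqrt (sqrt s)"
  have t: "0 \<le> t" "t < 1" and s_eq: "s = (t\<^sup>2)\<^sup>2"
    unfolding t_def using s by auto
  have "(\<lambda>n. real n * t^n + t^n) \<longlonglongrightarrow> 0 + 0"
    using t powser_times_n_limit_0[of t] by (intro tendsto_add LIMSEQ_power_zero) auto
  then have "Bseq (\<lambda>n. (real n + 1) * t^n)"
    by (auto simp: distrib_right intro!: convergent_imp_Bseq convergentI)
  then obtain B where B: "\<And>n. \<bar>(real n + 1) * t^n\<bar> \<le> B"
    by (auto simp: Bseq_def)
  have "(real n + 1)\<^sup>2 * s^n = ((real n + 1) * t^n)\<^sup>2 * (t\<^sup>2)^n" for n
    unfolding s_eq by (simp add: power2_eq_square power_mult_distrib)
  moreover have "((real n + 1) * t^n)\<^sup>2 \<le> B\<^sup>2" for n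
    using B[of n] by (simp add: abs_le_square_iff[symmetric] order_trans[OF _ abs_ge_self])
  ultimately have bound: "norm ((real n + 1)\<^sup>2 * s^n) \<le> B\<^sup>2 * (t\<^sup>2)^n" for n
    using t by (simp add: mult_right_mono)
  have "summable (\<lambda>n. B\<^sup>2 * (t\<^sup>2)^n)"
    using t by (intro summable_mult summable_geometric) (auto simp: abs_square_less_1)
  then show ?thesis
    using bound by (rule summable_comparison_test')
qed

lemma norm_diff_le_tail_if_dyadic_oscillation:
  fixes T :: "nat \<Rightarrow> 'a::real_normed_vector" and d :: "nat \<Rightarrow> real"
  assumes osc: "\<And>i N. 2^i \<le> N \<Longrightarrow> N \<le> 2^Suc i \<Longrightarrow> norm (T N - T (2^i)) \<le> d i"
    and summable: "summable d" and N: "2^I \<le> N"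
  shows "norm (T N - T (2^I)) \<le> suminf d - (\<Sum>j<I. d j)"
proof -
  have chain: "norm (T (2^i) - T (2^I)) \<le> (\<Sum>j<i. d j) - (\<Sum>j<I. d j)" if "I \<le> i" for i
    using that
  proof (induction i rule: dec_induct)
    case (step i)
    have "norm (T (2^Suc i) - T (2^I)) \<le> norm (T (2^Suc i) - T (2^i)) + norm (T (2^i) - T (2^I))"
      by (rule norm_diff_triangle_le) auto
    also have "\<dots> \<le> d i + ((\<Sum>j<i. d j) - (\<Sum>j<I. d j))"
      using osc[of i "2^Suc i"] step.IH by (intro add_mono) auto
    finally show ?case by simp
  qed simp
  have d_nonneg: "0 \<le> d j" for j
    using osc[of j "2^j"] by simp
  define i where "i = floor_log N"
  have "N > 0" using N order_less_le_trans[of 0 "2^I" N] by simp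
  then have i: "2^i \<le> N" "N < 2^Suc i"
    unfolding i_def by (auto simp: floor_log_exp2_le floor_log_exp2_gt)
  have "(2::nat)^I < 2^Suc i" using N i(2) by linarith
  then have "I < Suc i" by (rule power_less_imp_less_exp[rotated]) simp
  have "norm (T N - T (2^I)) \<le> norm (T N - T (2^i)) + norm (T (2^i) - T (2^I))"
    by (rule norm_diff_triangle_le) auto
  also have "\<dots> \<le> d i + ((\<Sum>j<i. d j) - (\<Sum>j<I. d j))"
    using osc[of i N] i chain \<open>I < Suc i\<close> by (intro add_mono) auto
  also have "\<dots> = (\<Sum>j<Suc i. d j) - (\<Sum>j<I. d j)" by simp
  also have "\<dots> \<le> suminf d - (\<Sum>j<I. d j)"
    using sum_le_suminf[OF summable, of "{..<Suc i}"] d_nonneg by simp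
  finally show ?thesis .
qed

lemma convergent_if_summable_dyadic_oscillation:
  fixes T :: "nat \<Rightarrow> 'a::{real_normed_vector, complete_space}" and d :: "nat \<Rightarrow> real"
  assumes osc: "\<And>i N. 2^i \<le> N \<Longrightarrow> N \<le> 2^Suc i \<Longrightarrow> norm (T N - T (2^i)) \<le> d i"
    and summable: "summable d"
  shows "convergent T"
proof -
  have tail: "norm (T N - T (2^I)) \<le> suminf d - (\<Sum>j<I. d j)" if "2^I \<le> N" for I N
    using osc summable that by (rule norm_diff_le_tail_if_dyadic_oscillation)
  have "(\<lambda>I. suminf d - (\<Sum>j<I. d j)) \<longlonglongrightarrow> suminf d - suminf d"
    using summable by (intro tendsto_diff tendsto_const summable_LIMSEQ)
  then have tail_lim: "(\<lambda>I. suminf d - (\<Sum>j<I. d j)) \<longlonglongrightarrow> 0" by simp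
  have "Cauchy T"
  proof (rule CauchyI)
    fix \<epsilon> :: real assume "0 < \<epsilon>"
    then obtain I where I: "suminf d - (\<Sum>j<I. d j) < \<epsilon> / 2"
      using order_tendstoD(2)[OF tail_lim, of "\<epsilon> / 2"] by (auto simp: eventually_sequentially)
    have "norm (T m - T n) < \<epsilon>" if "2^I \<le> m" "2^I \<le> n" for m n
    proof -
      have "norm (T m - T n) \<le> norm (T m - T (2^I)) + norm (T n - T (2^I))"
        using norm_diff_triangle_le[of "T m" "T (2^I)" _ "T n"] by (simp add: norm_minus_commute)
      also have "\<dots> < \<epsilon>" using tail[OF that(1)] tail[OF that(2)] I by simp
      finally show ?thesis .
    qed
    then show "\<exists>M. \<forall>m\<ge>M. \<forall>n\<ge>M. norm (T m - T n) < \<epsilon>" by blast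
  qed
  then show ?thesis by (simp add: Cauchy_convergent_iff)
qed

lemma block_sum_0_eq: "block_sum X u 0 N x = (\<Sum>n<N. X (Suc n) x *\<^sub>R u (Suc n))"
proof -
  have "{0<..N} = Suc ` {..<N}" by (auto simp: image_iff gr0_conv_Suc)
  then show ?thesis unfolding block_sum_def by (simp add: sum.reindex)
qed

lemma summable_if_summable_sqrt_dyadic_max_sq:
  fixes u :: "nat \<Rightarrow> 'h::{real_normed_vector, complete_space}"
  assumes "summable (\<lambda>i. sqrt (dyadic_max_sq (block_sum X u) (2^i) i x))"
  shows "summable (\<lambda>n. X (Suc n) x *\<^sub>R u (Suc n))"
proof -
  have "norm (block_sum X u 0 N x - block_sum X u 0 (2^i) x) \<le> sqrt (dyadic_max_sq (block_sum X u) (2^i) i x)"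
    if "2^i \<le> N" "N \<le> 2^Suc i" for i N
  proof (rule real_le_rsqrt)
    have "2^i + (N - 2^i) = N" using that by simp
    then have "block_sum X u 0 N x - block_sum X u 0 (2^i) x = block_sum X u (2^i) (2^i + (N - 2^i)) x"
      using block_sum_add[of 0 "2^i" N X u x] that by (metis add_diff_cancel_left' zero_le)
    then show "(norm (block_sum X u 0 N x - block_sum X u 0 (2^i) x))\<^sup>2
        \<le> dyadic_max_sq (block_sum X u) (2^i) i x"
      using le_dyadic_max_sq[of "N - 2^i" i "block_sum X u" "2^i" x] that by simp
  qed
  then have "convergent (\<lambda>N. block_sum X u 0 N x)"
    using assms by (rule convergent_if_summable_dyadic_oscillation)
  then show ?thesis
    by (simp add: summable_iff_convergent block_sum_0_eq)
qed

lemma AE_summable_sqrt_if_integral_le: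
  fixes D :: "nat \<Rightarrow> 'a \<Rightarrow> real"
  assumes nonneg: "\<And>i x. 0 \<le> D i x" and int: "\<And>i. integrable M (D i)"
    and bound: "\<And>i. (\<integral>x. D i x \<partial>M) \<le> K * ((real i + 1)\<^sup>2 * \<rho>^i)"
    and \<rho>: "0 < \<rho>" "\<rho> < 1"
  shows "AE x in M. summable (\<lambda>i. sqrt (D i x))"
proof -
  \<comment> \<open>Weighting by \<open>r^i\<close>, \<open>r = sqrt \<rho>\<close>, keeps the integrals summable;
    AM--GM transfers this to \<open>sqrt (D i x)\<close>.\<close>
  define r where "r = sqrt \<rho>"
  have r: "0 < r" "r < 1" "\<rho> = r\<^sup>2" unfolding r_def using \<rho> by auto
  have "summable (\<lambda>i. \<integral>x. D i x / r^i \<partial>M)"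
  proof (rule summable_comparison_test')
    show "summable (\<lambda>i. K * ((real i + 1)\<^sup>2 * r^i))"
      using r by (intro summable_mult summable_power2_mult_geometric) auto
    show "norm (\<integral>x. D i x / r^i \<partial>M) \<le> K * ((real i + 1)\<^sup>2 * r^i)" for i
    proof -
      have "(\<integral>x. D i x \<partial>M) / r^i \<le> K * ((real i + 1)\<^sup>2 * (r^i)\<^sup>2) / r^i"
        using bound[of i] r by (intro divide_right_mono) (auto simp: power_mult[symmetric] power_mult_distrib[symmetric] mult.commute)
      then show ?thesis
        using r nonneg by (simp add: integral_nonneg_AE power2_eq_square field_simps)
    qed
  qed
  then have "AE x in M. summable (\<lambda>i. D i x / r^i)"
    using nonneg int r by (intro AE_summable_if_summable_integral) auto
  then show ?thesis
  proof eventually_elim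
    fix x assume summable_D: "summable (\<lambda>i. D i x / r^i)"
    show "summable (\<lambda>i. sqrt (D i x))"
    proof (rule summable_comparison_test')
      show "summable (\<lambda>i. (D i x / r^i + r^i) / 2)"
        using summable_D r by (intro summable_divide summable_add summable_geometric) auto
      show "norm (sqrt (D i x)) \<le> (D i x / r^i + r^i) / 2" for i
        using arith_geo_mean_sqrt[of "D i x / r^i" "r^i"] nonneg[of i x] r by simp
    qed
  qed
qed

context prob_space
begin

lemma AE_summable_of_L2_orthonormal:
  fixes Z X :: "nat \<Rightarrow> 'a \<Rightarrow> real" and a :: "nat \<Rightarrow> nat \<Rightarrow> real"
    and u :: "nat \<Rightarrow> 'h::{real_inner, complete_space}"
  assumes orth: "L2_orthonormal Z {1..}"
    and X: "\<And>n x. X n x = (\<Sum>k = 1..n. a n k * Z k x)"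
    and C: "C \<ge> 0" and g: "g < 1" and D: "D \<ge> 0" and q: "q \<ge> 0"
    and a_bound: "\<And>n k. 1 \<le> k \<Longrightarrow> k \<le> n \<Longrightarrow> \<bar>a n k\<bar> \<le> C * real (n - k + 1) powr (-g)"
    and u_bound: "\<And>n. n \<ge> 1 \<Longrightarrow> norm (u n) \<le> D * real n powr (-q)"
    and decay: "3 - 2 * q - 2 * g < 0"
  shows "AE x in M. summable (\<lambda>n. X (Suc n) x *\<^sub>R u (Suc n))"
proof -
  obtain K where K: "\<And>P. P \<ge> 1 \<Longrightarrow> block_bound a u P (2 * P) \<le> K * real P powr (3 - 2 * q - 2 * g)"
    using block_bound_dyadic_le[OF C g D q a_bound u_bound] by blast
  define \<rho> where "\<rho> = 2 powr (3 - 2 * q - 2 * g)"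
  have \<rho>: "0 < \<rho>" "\<rho> < 1" unfolding \<rho>_def using decay by (auto simp: powr_less_one)
  define Dmax where "Dmax i = dyadic_max_sq (block_sum X u) (2^i) i" for i
  have "(\<integral>x. Dmax i x \<partial>M) \<le> K * ((real i + 1)\<^sup>2 * \<rho>^i)" for i
  proof -
    have "(\<integral>x. Dmax i x \<partial>M) \<le> (real i + 1)\<^sup>2 * block_bound a u (2^i) (2^i + 2^i)"
      unfolding Dmax_def
      by (rule integral_dyadic_max_sq_le[OF block_sum_add integrable_block_sum_sq[OF orth X]
            expectation_block_sum_sq_le[OF orth X] block_bound_superadd block_bound_nonneg])
    also have "block_bound a u (2^i) (2^i + 2^i) \<le> K * \<rho>^i"
      using K[of "2^i"] by (simp add: \<rho>_def mult_2 powr_realpow[symmetric] powr_powr mult.commute)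
    then have "(real i + 1)\<^sup>2 * block_bound a u (2^i) (2^i + 2^i) \<le> K * ((real i + 1)\<^sup>2 * \<rho>^i)"
      by (simp add: mult_left_mono mult.left_commute)
    finally show ?thesis .
  qed
  moreover have "0 \<le> Dmax i x" "integrable M (Dmax i)" for i x
    unfolding Dmax_def using integrable_block_sum_sq[OF orth X]
    by (auto intro: dyadic_max_sq_nonneg integrable_dyadic_max_sq)
  ultimately have "AE x in M. summable (\<lambda>i. sqrt (Dmax i x))"
    using \<rho> by (intro AE_summable_sqrt_if_integral_le) auto
  then show ?thesis
    unfolding Dmax_def by eventually_elim (rule summable_if_summable_sqrt_dyadic_max_sq)
qed

lemma AE_summable_signed_of_L2_orthonormal:
  fixes Z X :: "nat \<Rightarrow> 'a \<Rightarrow> real" and a :: "nat \<Rightarrow> nat \<Rightarrow> real"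
    and u :: "nat \<Rightarrow> 'h::{real_inner, complete_space}" and s :: "nat \<Rightarrow> real"
  assumes orth: "L2_orthonormal Z {1..}"
    and X: "\<And>n x. X n x = (\<Sum>k = 1..n. a n k * Z k x)"
    and C: "C \<ge> 0" and g: "g < 1" and D: "D \<ge> 0" and q: "q \<ge> 0"
    and a_bound: "\<And>n k. 1 \<le> k \<Longrightarrow> k \<le> n \<Longrightarrow> \<bar>a n k\<bar> \<le> C * real (n - k + 1) powr (-g)"
    and u_bound: "\<And>n. n \<ge> 1 \<Longrightarrow> norm (u n) \<le> D * real n powr (-q)"
    and decay: "3 - 2 * q - 2 * g < 0"
    and sign: "\<And>n. \<bar>s n\<bar> = 1"
  shows "AE x in M. summable (\<lambda>n. (s (Suc n) * X (Suc n) x) *\<^sub>R u (Suc n))"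
proof (rule AE_summable_of_L2_orthonormal[OF orth _ C g D q _ u_bound decay])
  show "s n * X n x = (\<Sum>k = 1..n. (s n * a n k) * Z k x)" for n x
    by (simp add: X sum_distrib_left mult.assoc)
  show "\<bar>s n * a n k\<bar> \<le> C * real (n - k + 1) powr (-g)" if "1 \<le> k" "k \<le> n" for n k
    using a_bound[OF that] sign[of n] by (simp add: abs_mult)
qed

end

lemma le_sqrt_mult_powr_if_power2_le:
  fixes x y c e :: real
  assumes le: "x\<^sup>2 \<le> c * y powr (2 * e)" and "0 \<le> x" "0 \<le> c" "0 < y"
  shows "x \<le> sqrt c * y powr e"
proof (rule power2_le_imp_le)
  show "x\<^sup>2 \<le> (sqrt c * y powr e)\<^sup>2"
    using le assms by (simp add: power_mult_distrib powr_power mult.commute)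
qed (use assms in simp)

theorem mainTheorem9:
  fixes M :: "'w measure"
    and Z :: "nat \<Rightarrow> 'w \<Rightarrow> real"
    and a :: "nat \<Rightarrow> nat \<Rightarrow> real"
    and X :: "nat \<Rightarrow> 'w \<Rightarrow> real"
    and u :: "nat \<Rightarrow> 'h :: {real_inner, complete_space}"
    and C C' \<alpha> \<beta> :: real
  assumes "prob_space M"
    and meas: "\<And>k. k \<ge> 1 \<Longrightarrow> Z k \<in> borel_measurable M"
    and indep: "prob_space.indep_vars M (\<lambda>_. borel) Z {1..}"
    and symm: "\<And>k. k \<ge> 1 \<Longrightarrow> distr M borel (Z k) = distr M borel (\<lambda>x. - Z k x)"
    and var_int: "\<And>k. k \<ge> 1 \<Longrightarrow> integrable M (\<lambda>x. (Z k x)\<^sup>2)"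
    and var: "\<And>k. k \<ge> 1 \<Longrightarrow> prob_space.expectation M (\<lambda>x. (Z k x)\<^sup>2) = 1"
    and X_def: "\<And>n x. X n x = (\<Sum>k = 1..n. a n k * Z k x)"
    and C_pos: "C > 0" and alpha: "\<alpha> \<le> 1"
    and a_bound: "\<And>n k. 1 \<le> k \<Longrightarrow> k \<le> n \<Longrightarrow> \<bar>a n k\<bar> \<le> C * (real (n - k + 1)) powr (- \<alpha>)"
    and C'_pos: "C' > 0" and beta: "\<beta> > 1 - \<alpha>"
    and u_bound: "\<And>n. n \<ge> 1 \<Longrightarrow> (norm (u n))\<^sup>2 \<le> C' * (real n) powr (- (1 + 2 * \<beta>))"
  shows "(AE x in M. summable (\<lambda>n. X (Suc n) x *\<^sub>R u (Suc n)))
    \<and> (\<forall>\<epsilon> :: nat \<Rightarrow> real. (\<forall>n. \<epsilon> n \<in> {-1, 1}) \<longrightarrow>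
          (AE x in M. summable (\<lambda>n. (\<epsilon> (Suc n) * X (Suc n) x) *\<^sub>R u (Suc n))))"
proof -
  interpret prob_space M by fact
  have orth: "L2_orthonormal Z {1..}"
    using meas indep symm var_int var by (intro L2_orthonormal_if_indep_symmetric) auto
  \<comment> \<open>For \<open>\<alpha> = 1\<close> the exponent must be lowered below \<open>1\<close>, at the cost of part of
    the margin \<open>\<beta> - (1 - \<alpha>)\<close>.\<close>
  define g where "g = (1 - \<beta> + \<alpha>) / 2"
  define q where "q = 1 / 2 + \<beta>"
  have g: "g < 1" "g \<le> \<alpha>" and q: "q \<ge> 0" and decay: "3 - 2 * q - 2 * g < 0"
    using alpha beta unfolding g_def q_def by auto
  have a_bound': "\<bar>a n k\<bar> \<le> C * real (n - k + 1) powr (-g)" if "1 \<le> k" "k \<le> n" for n k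
    using a_bound[OF that] g(2) C_pos
    by (auto intro: order_trans[OF _ mult_left_mono[OF powr_mono]])
  have u_bound': "norm (u n) \<le> sqrt C' * real n powr (-q)" if "n \<ge> 1" for n
    using u_bound[OF that] that C'_pos by (intro le_sqrt_mult_powr_if_power2_le) (simp_all add: q_def)
  note signed = AE_summable_signed_of_L2_orthonormal[OF orth X_def _ g(1) _ q a_bound' u_bound' decay]
  show ?thesis
  proof (intro conjI allI impI)
    show "AE x in M. summable (\<lambda>n. X (Suc n) x *\<^sub>R u (Suc n))"
      using signed[of "\<lambda>_. 1"] C_pos C'_pos by simp
    fix \<epsilon> :: "nat \<Rightarrow> real" assume \<epsilon>: "\<forall>n. \<epsilon> n \<in> {-1, 1}"
    have "\<bar>\<epsilon> n\<bar> = 1" for n using \<epsilon>[rule_format, of n] by auto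
    then show "AE x in M. summable (\<lambda>n. (\<epsilon> (Suc n) * X (Suc n) x) *\<^sub>R u (Suc n))"
      using C_pos C'_pos by (intro signed) auto
  qed
qed

end
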